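(* Let $T_1,\dots,T_n$ be i.i.d. nonnegative random variables whose distribution function satisfies $F_T(x)=f_T(0)x+o(x^{4/3})$ as $x\downarrow0$, with $f_T(0)\in(0,\infty)$; let $S$ be a nonnegative random variable independent of the $T_i$ with $\mathbb E[S^2]<\infty$, let $\beta\in\mathbb R$, $D:=\frac{S}{n}(1+\beta n^{-1/3})$ and $A_n':=\sum_{i=1}^n\mathbf 1\{T_i\le D\}$. Then there exist random variables $Y_n$ such that $(A_n')^2$ is stochastically dominated by $Y_n$ for every $n$ and the family $(Y_n)_{n\ge1}$ is uniformly integrable. In particular, for every $\varepsilon>0$, $$\mathbb E\big[(A_n')^2\mathbf 1\{(A_n')^2>\varepsilon n^{2/3}\}\big]\to0\qquad(n\to\infty).$$
   Context: A real random variable $Y$ is stochastically dominated by $X$ if $\mathbb P(X\le x)\le\mathbb P(Y\le x)$ for all $x\in\mathbb R$. *)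

theory Defs
  imports "HOL-Probability.Probability" "HOL-Library.Landau_Symbols"
begin

text \<open>The random variable A'_n (we index T_0, ..., T_(n-1) instead of T_1, ..., T_n).\<close>
definition A_count :: "(nat \<Rightarrow> 'a \<Rightarrow> real) \<Rightarrow> ('a \<Rightarrow> real) \<Rightarrow> real \<Rightarrow> nat \<Rightarrow> 'a \<Rightarrow> real" where
  "A_count T S \<beta> n \<omega> =
     real (card {i. i < n \<and> T i \<omega> \<le> S \<omega> / real n * (1 + \<beta> * real n powr (-1/3))})"

text \<open>A real random variable Y is stochastically dominated by X iff
  P(X \<le> x) \<le> P(Y \<le> x) for all x. Here X is given by its law \<mu> and Y = Z on M.\<close>
definition stoch_dominated_by_law :: "'a measure \<Rightarrow> ('a \<Rightarrow> real) \<Rightarrow> real measure \<Rightarrow> bool" where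
  "stoch_dominated_by_law M Z \<mu> \<longleftrightarrow>
     (\<forall>x::real. measure \<mu> {..x} \<le> measure M {\<omega> \<in> space M. Z \<omega> \<le> x})"

definition uniformly_integrable_laws :: "(nat \<Rightarrow> real measure) \<Rightarrow> bool" where
  "uniformly_integrable_laws \<mu> \<longleftrightarrow>
     ((\<lambda>K::real. SUP n\<in>{1..}. \<integral>\<^sup>+ y. ennreal (\<bar>y\<bar> * indicator {y. \<bar>y\<bar> > K} y) \<partial>\<mu> n)
        \<longlongrightarrow> 0) at_top"

end

theory Submission
  imports Defs "HOL-Real_Asymp.Real_Asymp"
begin

text \<open>
  Let \<open>F\<^sub>T(x) \<le> C x\<close> for \<open>x > 0\<close> and \<open>a = 1 / (16 C (1 + |\<beta>|))\<close>. On \<open>S \<le> a k\<close> the random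
  threshold \<open>D\<close> is at most the deterministic level \<open>a k (1 + |\<beta>|) / n\<close>, so a union bound over
  \<open>k\<close>-subsets of the \<open>T\<^sub>i\<close> gives \<open>P(A'\<^sub>n \<ge> k) \<le> P(S > a k) + 4\<^sup>-\<^sup>k\<close>, uniformly in \<open>n\<close>.
  Weighting these tails as in \<open>N\<^sup>2 \<le> j\<^sup>2 + \<Sum>\<^bsub>j<k\<le>N\<^esub> 2k\<close> bounds
  \<open>E[(A'\<^sub>n)\<^sup>2; A'\<^sub>n \<ge> j]\<close> by \<open>E[2(S/a)\<^sup>2 + S/a; S > a j]\<close> plus a geometric remainder, independently
  of \<open>n\<close>; this tends to \<open>0\<close> as \<open>j \<rightarrow> \<infinity>\<close> since \<open>E S\<^sup>2 < \<infinity>\<close>. Hence the laws of the \<open>(A'\<^sub>n)\<^sup>2\<close>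
  themselves are uniformly integrable.
\<close>

lemma power_div_fact_le_exp:
  fixes y :: real
  assumes "0 \<le> y"
  shows "y ^ k / fact k \<le> exp y"
proof -
  have "(\<lambda>n. y ^ n / fact n) sums exp y"
    using exp_converges[of y] by (simp add: divide_inverse mult.commute scaleR_conv_of_real)
  then have summable: "summable (\<lambda>n. y ^ n / fact n)" and "exp y = (\<Sum>n. y ^ n / fact n)"
    by (simp_all add: sums_iff)
  have "y ^ k / fact k = (\<Sum>n\<in>{k}. y ^ n / fact n)"
    by simp
  also have "\<dots> \<le> (\<Sum>n. y ^ n / fact n)"
    by (rule sum_le_suminf[OF summable]) (use assms in auto)
  finally show ?thesis
    using \<open>exp y = _\<close> by simp
qed

lemma binomial_mult_power_le_quarter_power:
  fixes p :: real
  assumes "0 \<le> p" and "16 * real n * p \<le> real k"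
  shows "real (n choose k) * p ^ k \<le> (1/4) ^ k"
proof -
  have "real (n choose k) \<le> real n ^ k / fact k"
  proof -
    have "real ((n choose k) * fact k) \<le> real (n ^ k)"
      using binomial_fact_pow[of n k] by (simp only: of_nat_le_iff)
    then show ?thesis
      by (simp add: field_simps)
  qed
  then have "real (n choose k) * p ^ k \<le> real n ^ k / fact k * p ^ k"
    using assms(1) by (intro mult_right_mono) auto
  also have "\<dots> = (real n * p) ^ k / fact k"
    by (simp add: power_mult_distrib)
  also have "\<dots> \<le> (real k / 16) ^ k / fact k"
    using assms by (intro divide_right_mono power_mono) auto
  also have "\<dots> = (real k ^ k / fact k) / 16 ^ k"
    by (simp add: power_divide)
  also have "\<dots> \<le> exp (real k) / 16 ^ k"
    by (intro divide_right_mono power_div_fact_le_exp) auto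
  also have "\<dots> = (exp 1 / 16) ^ k"
    by (simp add: power_divide flip: exp_of_nat_mult)
  also have "\<dots> \<le> (1/4) ^ k"
    using e_less_272 by (intro power_mono) auto
  finally show ?thesis .
qed

text \<open>Weights of the discrete layer-cake bound
  \<open>N\<^sup>2 \<le> (\<Sum>k=j..n. sq_tail_weight j k * of_bool (k \<le> N))\<close> for \<open>j \<le> N \<le> n\<close>.\<close>
definition sq_tail_weight :: "nat \<Rightarrow> nat \<Rightarrow> real" where
  "sq_tail_weight j k = (if k = j then real j ^ 2 else 2 * real k)"

lemma sq_tail_weight_nonneg: "0 \<le> sq_tail_weight j k"
  by (simp add: sq_tail_weight_def)

lemma sq_le_sum_sq_tail_weight:
  assumes "j \<le> N"
  shows "real N ^ 2 \<le> (\<Sum>k=j..N. sq_tail_weight j k)"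
  using assms
proof (induction N rule: dec_induct)
  case base
  then show ?case by (simp add: sq_tail_weight_def)
next
  case (step m)
  have "{j..Suc m} = insert (Suc m) {j..m}" and "Suc m \<noteq> j"
    using step.hyps by auto
  then show ?case
    using step.IH by (simp add: sq_tail_weight_def power2_eq_square algebra_simps)
qed

lemma sq_of_bool_le_sum_sq_tail_weight:
  assumes "N \<le> n"
  shows "real N ^ 2 * of_bool (j \<le> N) \<le> (\<Sum>k=j..n. sq_tail_weight j k * of_bool (k \<le> N))"
proof (cases "j \<le> N")
  case True
  have "(\<Sum>k=j..n. sq_tail_weight j k * of_bool (k \<le> N)) = (\<Sum>k=j..N. sq_tail_weight j k)"
    using assms by (intro sum.mono_neutral_cong_right) auto
  then show ?thesis
    using sq_le_sum_sq_tail_weight[OF True] True by simp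
next
  case False
  then show ?thesis
    by (simp add: sum_nonneg sq_tail_weight_nonneg)
qed

lemma sum_two_mult_of_bool_less_le:
  fixes t :: real
  assumes "0 \<le> t" and "finite F"
  shows "(\<Sum>k\<in>F. 2 * real k * of_bool (real k < t)) \<le> t * (t + 1)"
proof -
  define m where "m = nat \<lceil>t\<rceil>"
  have "(\<Sum>k\<in>F. 2 * real k * of_bool (real k < t)) = (\<Sum>k\<in>F \<inter> {k. real k < t}. 2 * real k)"
    using assms(2) by (simp add: sum.inter_restrict of_bool_def if_distrib cong: if_cong)
  also have "\<dots> \<le> (\<Sum>k<m. 2 * real k)"
  proof (intro sum_mono2 subsetI)
    fix k assume "k \<in> F \<inter> {k. real k < t}"
    then have "int k < \<lceil>t\<rceil>"
      by (simp add: less_ceiling_iff)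
    then show "k \<in> {..<m}"
      by (simp add: m_def zless_nat_eq_int_zless)
  qed auto
  also have "\<dots> = real m * (real m - 1)"
    by (induction m) (auto simp: algebra_simps)
  also have "\<dots> \<le> t * (t + 1)"
  proof (cases "m = 0")
    case False
    then have "1 \<le> real m" and "real m < t + 1"
      using assms(1) unfolding m_def by linarith+
    then have "real m * (real m - 1) \<le> (t + 1) * t"
      using assms(1) by (intro mult_mono) auto
    then show ?thesis
      by (simp add: mult.commute)
  qed (use assms in simp)
  finally show ?thesis .
qed

lemma sum_sq_tail_weight_of_bool_less_le:
  fixes t :: real
  assumes "0 \<le> t"
  shows "(\<Sum>k=j..n. sq_tail_weight j k * of_bool (real k < t)) \<le> (2 * t\<^sup>2 + t) * of_bool (real j < t)"
proof (cases "real j < t \<and> j \<le> n")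
  case True
  have "{j..n} = insert j {j<..n}"
    using True by auto
  then have "(\<Sum>k=j..n. sq_tail_weight j k * of_bool (real k < t))
      = real j ^ 2 + (\<Sum>k\<in>{j<..n}. 2 * real k * of_bool (real k < t))"
    using True by (simp add: sq_tail_weight_def)
  also have "\<dots> \<le> t\<^sup>2 + t * (t + 1)"
    using True assms by (intro add_mono power_mono sum_two_mult_of_bool_less_le) auto
  finally show ?thesis
    using True by (simp add: power2_eq_square algebra_simps)
next
  case False
  then have "(\<Sum>k=j..n. sq_tail_weight j k * of_bool (real k < t)) = 0"
    by (intro sum.neutral) auto
  then show ?thesis
    using assms by simp
qed

lemma sum_sq_tail_weight_quarter_power_le:
  "(\<Sum>k=j..n. sq_tail_weight j k * (1/4) ^ k) \<le> real j ^ 2 * (1/4) ^ j + 2 * (1/2) ^ j"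
proof (cases "j \<le> n")
  case True
  have "{j..n} = insert j {Suc j..n}"
    using True by auto
  then have "(\<Sum>k=j..n. sq_tail_weight j k * (1/4) ^ k)
      = real j ^ 2 * (1/4) ^ j + (\<Sum>k=Suc j..n. 2 * (real k * (1/4) ^ k))"
    by (simp add: sq_tail_weight_def mult.assoc)
  also have "(\<Sum>k=Suc j..n. 2 * (real k * (1/4) ^ k)) \<le> (\<Sum>k=Suc j..n. 2 * (1/2) ^ k)"
  proof (intro sum_mono mult_left_mono)
    fix k :: nat
    have "real k * (1/4) ^ k \<le> 2 ^ k * (1/4) ^ k"
      using less_exp[of k] by (intro mult_right_mono) (auto simp flip: of_nat_less_iff)
    also have "(2::real) ^ k * (1/4) ^ k = (1/2) ^ k"
      by (simp add: power_mult_distrib[symmetric])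
    finally show "real k * (1/4) ^ k \<le> (1/2 :: real) ^ k" .
  qed simp
  also have "\<dots> \<le> 2 * (1/2) ^ j"
    by (simp add: sum_distrib_left[symmetric] sum_gp)
  finally show ?thesis
    by simp
qed simp

lemma (in prob_space) indep_sets_reindex:
  assumes indep: "indep_sets F (h ` I)" and inj: "inj_on h I"
  shows "indep_sets (\<lambda>i. F (h i)) I"
proof (rule indep_setsI)
  show "F (h i) \<subseteq> events" if "i \<in> I" for i
    using indep that by (auto simp: indep_sets_def)
next
  fix A J assume J: "J \<noteq> {}" "J \<subseteq> I" "finite J" "\<forall>j\<in>J. A j \<in> F (h j)"
  have inj_J: "inj_on h J"
    using inj J(2) by (rule inj_on_subset)
  define A' where "A' j = A (the_inv_into J h j)" for j
  have A'_h: "A' (h j) = A j" if "j \<in> J" for j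
    using inj_J that by (simp add: A'_def the_inv_into_f_f)
  have "prob (\<Inter>j\<in>h ` J. A' j) = (\<Prod>j\<in>h ` J. prob (A' j))"
    using J A'_h by (intro indep_setsD[OF indep]) auto
  then show "prob (\<Inter>j\<in>J. A j) = (\<Prod>j\<in>J. prob (A j))"
    using A'_h by (simp add: prod.reindex[OF inj_J])
qed

lemma (in prob_space) indep_vars_reindex:
  assumes "indep_vars M' X (h ` I)" and "inj_on h I"
  shows "indep_vars (\<lambda>i. M' (h i)) (\<lambda>i. X (h i)) I"
  using assms indep_sets_reindex[where F="\<lambda>j. {X j -` A \<inter> space M | A. A \<in> sets (M' j)}"]
  by (auto simp: indep_vars_def2)

lemma (in prob_space) indep_vars_Some:
  assumes "indep_vars M' X UNIV"
  shows "indep_vars (\<lambda>i. M' (Some i)) (\<lambda>i. X (Some i)) UNIV"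
  using indep_vars_subset[OF assms, of "Some ` UNIV"] by (rule indep_vars_reindex) auto

lemma (in prob_space) prob_many_below_le:
  fixes X :: "nat \<Rightarrow> 'a \<Rightarrow> real"
  assumes indep: "indep_vars (\<lambda>_. borel) X {..<n}"
    and p: "\<And>i. i < n \<Longrightarrow> prob {\<omega>\<in>space M. X i \<omega> \<le> x} \<le> p"
  shows "prob {\<omega>\<in>space M. k \<le> card {i. i < n \<and> X i \<omega> \<le> x}} \<le> real (n choose k) * p ^ k"
proof (cases "k = 0")
  case False
  define E where "E I = {\<omega>\<in>space M. \<forall>i\<in>I. X i \<omega> \<le> x}" for I
  define II where "II = {I. I \<subseteq> {..<n} \<and> card I = k}"
  have II: "finite I" "I \<noteq> {}" "I \<subseteq> {..<n}" "card I = k" if "I \<in> II" for I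
    using that False by (auto simp: II_def intro: finite_subset)
  have finite_II: "finite II"
    unfolding II_def by (rule finite_subset[of _ "Pow {..<n}"]) auto
  have X_events: "{\<omega>\<in>space M. X i \<omega> \<le> x} \<in> events" if "i < n" for i
  proof -
    have "X i \<in> borel_measurable M"
      using indep that by (auto simp: indep_vars_def)
    then show ?thesis
      by measurable
  qed
  have E_events: "E I \<in> events" if "I \<in> II" for I
    unfolding E_def using II[OF that] X_events by (intro sets.sets_Collect_finite_All') auto
  have prob_E: "prob (E I) \<le> p ^ k" if "I \<in> II" for I
  proof -
    have preimage: "X i -` {..x} \<inter> space M = {\<omega>\<in>space M. X i \<omega> \<le> x}" for i
      by auto
    have "E I = (\<Inter>i\<in>I. X i -` {..x} \<inter> space M)"
      using II[OF that] by (auto simp: E_def)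
    also have "prob \<dots> = (\<Prod>i\<in>I. prob (X i -` {..x} \<inter> space M))"
      using II[OF that] by (intro indep_varsD[OF indep]) auto
    finally have "prob (E I) = (\<Prod>i\<in>I. prob {\<omega>\<in>space M. X i \<omega> \<le> x})"
      by (simp only: preimage)
    also have "\<dots> \<le> (\<Prod>i\<in>I. p)"
      using II[OF that] p by (intro prod_mono) auto
    finally show ?thesis
      using II[OF that] by simp
  qed
  have "{\<omega>\<in>space M. k \<le> card {i. i < n \<and> X i \<omega> \<le> x}} \<subseteq> (\<Union>I\<in>II. E I)"
  proof
    fix \<omega> assume "\<omega> \<in> {\<omega>\<in>space M. k \<le> card {i. i < n \<and> X i \<omega> \<le> x}}"
    then obtain I where "I \<subseteq> {i. i < n \<and> X i \<omega> \<le> x}" "card I = k" "\<omega> \<in> space M"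
      by (auto elim: obtain_subset_with_card_n)
    then show "\<omega> \<in> (\<Union>I\<in>II. E I)"
      by (auto simp: II_def E_def)
  qed
  then have "prob {\<omega>\<in>space M. k \<le> card {i. i < n \<and> X i \<omega> \<le> x}} \<le> prob (\<Union>I\<in>II. E I)"
    using finite_II E_events by (intro finite_measure_mono sets.finite_UN) auto
  also have "\<dots> \<le> (\<Sum>I\<in>II. prob (E I))"
    using finite_II E_events by (intro finite_measure_subadditive_finite) auto
  also have "\<dots> \<le> (\<Sum>I\<in>II. p ^ k)"
    using prob_E by (rule sum_mono)
  also have "\<dots> = real (n choose k) * p ^ k"
    using n_subsets[of "{..<n}" k] by (simp add: II_def)
  finally show ?thesis .
qed simp

lemma (in prob_space) expectation_sum_indicator:
  assumes "finite I" and "\<And>k. k \<in> I \<Longrightarrow> E k \<in> events"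
  shows "expectation (\<lambda>\<omega>. \<Sum>k\<in>I. c k * indicator (E k) \<omega>) = (\<Sum>k\<in>I. c k * prob (E k))"
    and "integrable M (\<lambda>\<omega>. \<Sum>k\<in>I. c k * indicator (E k) \<omega>)"
proof -
  have integrable: "integrable M (\<lambda>\<omega>. c k * indicator (E k) \<omega> :: real)" if "k \<in> I" for k
    using assms(2)[OF that] by (intro integrable_mult_right integrable_real_indicator) (auto simp: less_top[symmetric])
  then show "integrable M (\<lambda>\<omega>. \<Sum>k\<in>I. c k * indicator (E k) \<omega>)"
    by (rule Bochner_Integration.integrable_sum)
  have "E k \<inter> space M = E k" if "k \<in> I" for k
    using assms(2)[OF that] sets.sets_into_space by blast
  then show "expectation (\<lambda>\<omega>. \<Sum>k\<in>I. c k * indicator (E k) \<omega>) = (\<Sum>k\<in>I. c k * prob (E k))"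
    by (simp add: Bochner_Integration.integral_sum[OF integrable])
qed

lemma (in prob_space) stoch_dominated_by_law_distr:
  assumes "X \<in> borel_measurable M"
  shows "stoch_dominated_by_law M X (distr M borel X)"
proof -
  have "{\<omega>\<in>space M. X \<omega> \<le> x} = X -` {..x} \<inter> space M" for x
    by auto
  then show ?thesis
    using assms by (simp add: stoch_dominated_by_law_def measure_distr)
qed

lemma (in prob_space) uniformly_integrable_laws_distrI:
  fixes X :: "nat \<Rightarrow> 'a \<Rightarrow> real" and B :: "real \<Rightarrow> real"
  assumes meas: "\<And>n. X n \<in> borel_measurable M"
    and nonneg: "\<And>n \<omega>. \<omega> \<in> space M \<Longrightarrow> 0 \<le> X n \<omega>"
    and integrable: "\<And>n. integrable M (X n)"
    and tail: "\<And>n K. 1 \<le> n \<Longrightarrow> 0 \<le> K \<Longrightarrow> expectation (\<lambda>\<omega>. X n \<omega> * indicator {\<omega>. K < X n \<omega>} \<omega>) \<le> B K"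
    and B: "(B \<longlongrightarrow> 0) at_top"
  shows "uniformly_integrable_laws (\<lambda>n. distr M borel (X n))"
  unfolding uniformly_integrable_laws_def
proof (rule tendsto_sandwich[OF _ _ tendsto_const])
  have "(\<integral>\<^sup>+ y. ennreal (\<bar>y\<bar> * indicator {y. K < \<bar>y\<bar>} y) \<partial>distr M borel (X n)) \<le> ennreal (B K)"
    if "1 \<le> n" and "0 \<le> K" for n K
  proof -
    have "(\<integral>\<^sup>+ y. ennreal (\<bar>y\<bar> * indicator {y. K < \<bar>y\<bar>} y) \<partial>distr M borel (X n))
        = (\<integral>\<^sup>+ \<omega>. ennreal (X n \<omega> * indicator {\<omega>. K < X n \<omega>} \<omega>) \<partial>M)"
      using meas nonneg by (subst nn_integral_distr) (auto intro!: nn_integral_cong simp: indicator_def)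
    also have "\<dots> = ennreal (expectation (\<lambda>\<omega>. X n \<omega> * indicator {\<omega>. K < X n \<omega>} \<omega>))"
    proof (rule nn_integral_eq_integral)
      show "integrable M (\<lambda>\<omega>. X n \<omega> * indicator {\<omega>. K < X n \<omega>} \<omega>)"
      proof (rule Bochner_Integration.integrable_bound[OF integrable[of n]])
        show "(\<lambda>\<omega>. X n \<omega> * indicator {\<omega>. K < X n \<omega>} \<omega>) \<in> borel_measurable M"
          using meas[of n] by measurable
      qed (auto simp: indicator_def)
    qed (use nonneg in \<open>auto simp: indicator_def\<close>)
    also have "\<dots> \<le> ennreal (B K)"
      using tail[OF that] by (rule ennreal_leI)
    finally show ?thesis .
  qed
  then show "\<forall>\<^sub>F K in at_top. (SUP n\<in>{1..}. \<integral>\<^sup>+ y. ennreal (\<bar>y\<bar> * indicator {y. K < \<bar>y\<bar>} y) \<partial>distr M borel (X n))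
      \<le> ennreal (B K)"
    by (intro eventually_at_top_linorderI[of 0] SUP_least) auto
  show "((\<lambda>K. ennreal (B K)) \<longlongrightarrow> 0) at_top"
    using tendsto_ennrealI[OF B] by simp
qed simp

lemma (in prob_space) tendsto_expectation_tail_zero:
  fixes X :: "nat \<Rightarrow> 'a \<Rightarrow> real" and B :: "real \<Rightarrow> real" and K :: "nat \<Rightarrow> real"
  assumes nonneg: "\<And>n \<omega>. \<omega> \<in> space M \<Longrightarrow> 0 \<le> X n \<omega>"
    and tail: "\<And>n K. 1 \<le> n \<Longrightarrow> 0 \<le> K \<Longrightarrow> expectation (\<lambda>\<omega>. X n \<omega> * indicator {\<omega>. K < X n \<omega>} \<omega>) \<le> B K"
    and B: "(B \<longlongrightarrow> 0) at_top"
    and K: "filterlim K at_top sequentially"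
  shows "(\<lambda>n. expectation (\<lambda>\<omega>. X n \<omega> * indicator {\<omega>. K n < X n \<omega>} \<omega>)) \<longlonglongrightarrow> 0"
proof (rule tendsto_sandwich[OF _ _ tendsto_const])
  show "\<forall>\<^sub>F n in sequentially. 0 \<le> expectation (\<lambda>\<omega>. X n \<omega> * indicator {\<omega>. K n < X n \<omega>} \<omega>)"
    using nonneg by (intro always_eventually allI integral_nonneg) (auto simp: indicator_def)
  have "\<forall>\<^sub>F n in sequentially. 1 \<le> n \<and> 0 \<le> K n"
    using K by (intro eventually_conj eventually_ge_at_top) (simp add: filterlim_at_top)
  then show "\<forall>\<^sub>F n in sequentially. expectation (\<lambda>\<omega>. X n \<omega> * indicator {\<omega>. K n < X n \<omega>} \<omega>) \<le> B (K n)"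
    by eventually_elim (use tail in blast)
  show "(\<lambda>n. B (K n)) \<longlonglongrightarrow> 0"
    using filterlim_compose[OF B K] by simp
qed

lemma (in prob_space) prob_le_eq_if_distr_eq:
  assumes "X \<in> borel_measurable M" and "Y \<in> borel_measurable M"
    and "distr M borel X = distr M borel Y"
  shows "prob {\<omega>\<in>space M. X \<omega> \<le> (x::real)} = prob {\<omega>\<in>space M. Y \<omega> \<le> x}"
proof -
  have "prob {\<omega>\<in>space M. Z \<omega> \<le> x} = measure (distr M borel Z) {..x}"
    if "Z \<in> borel_measurable M" for Z
  proof -
    have "{\<omega>\<in>space M. Z \<omega> \<le> x} = Z -` {..x} \<inter> space M"
      by auto
    then show ?thesis
      using that by (simp add: measure_distr)
  qed
  then show ?thesis
    using assms by simp
qed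

lemma le_linear_if_bigo_at_right_0:
  fixes F :: "real \<Rightarrow> real"
  assumes bounded: "\<And>x. F x \<le> b"
    and near_0: "(\<lambda>x. F x - c * x) \<in> O[at_right 0](\<lambda>x. x)"
  shows "\<exists>C>0. \<forall>x>0. F x \<le> C * x"
proof -
  obtain c' where "0 < c'" and "\<forall>\<^sub>F x in at_right 0. \<bar>F x - c * x\<bar> \<le> c' * \<bar>x\<bar>"
    using near_0 by (elim landau_o.bigE) simp
  then obtain d where "0 < d" and d: "\<And>x. 0 < x \<Longrightarrow> x < d \<Longrightarrow> \<bar>F x - c * x\<bar> \<le> c' * \<bar>x\<bar>"
    unfolding eventually_at_right_field by auto
  define C where "C = max (\<bar>c\<bar> + c') (\<bar>b\<bar> / d)"
  have "F x \<le> C * x" if "0 < x" for x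
  proof (cases "x < d")
    case True
    have "F x \<le> c * x + c' * x"
      using d[OF \<open>0 < x\<close> True] \<open>0 < x\<close> by (simp add: abs_le_iff)
    moreover have "c * x \<le> \<bar>c\<bar> * x"
      using \<open>0 < x\<close> by (intro mult_right_mono) auto
    ultimately have "F x \<le> (\<bar>c\<bar> + c') * x"
      unfolding distrib_right by linarith
    also have "\<dots> \<le> C * x"
      using \<open>0 < x\<close> by (intro mult_right_mono) (auto simp: C_def)
    finally show ?thesis .
  next
    case False
    have "F x \<le> \<bar>b\<bar> / d * d"
      using bounded[of x] \<open>0 < d\<close> by simp
    also have "\<dots> \<le> \<bar>b\<bar> / d * x"
      using False \<open>0 < d\<close> by (intro mult_left_mono) auto
    also have "\<dots> \<le> C * x"
      using \<open>0 < x\<close> by (intro mult_right_mono) (auto simp: C_def)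
    finally show ?thesis .
  qed
  moreover have "0 < C"
    using \<open>0 < c'\<close> abs_ge_zero[of c] unfolding C_def less_max_iff_disj by linarith
  ultimately show ?thesis
    by blast
qed

lemma (in prob_space) cdf_le_linear:
  assumes "(\<lambda>x. prob {\<omega>\<in>space M. X \<omega> \<le> x} - c * x) \<in> o[at_right 0](\<lambda>x. x powr (4/3))"
  shows "\<exists>C>0. \<forall>x>0. prob {\<omega>\<in>space M. X \<omega> \<le> x} \<le> C * x"
proof -
  have "(\<lambda>x. x powr (4/3)) \<in> O[at_right 0](\<lambda>x::real. x)"
    by real_asymp
  with assms have "(\<lambda>x. prob {\<omega>\<in>space M. X \<omega> \<le> x} - c * x) \<in> O[at_right 0](\<lambda>x. x)"
    by (rule landau_o.small_big_trans')
  then show ?thesis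
    by (rule le_linear_if_bigo_at_right_0[OF prob_le_1])
qed

lemma borel_measurable_card_le:
  fixes T :: "nat \<Rightarrow> 'a \<Rightarrow> real" and g :: "'a \<Rightarrow> real"
  assumes [measurable]: "\<And>i. T i \<in> borel_measurable M" "g \<in> borel_measurable M"
  shows "(\<lambda>\<omega>. real (card {i. i < n \<and> T i \<omega> \<le> g \<omega>})) \<in> borel_measurable M"
proof -
  have "(\<lambda>\<omega>. real (card {i. i < n \<and> T i \<omega> \<le> g \<omega>})) = (\<lambda>\<omega>. \<Sum>i<n. of_bool (T i \<omega> \<le> g \<omega>))"
    by (simp add: lessThan_def Collect_conj_eq[symmetric])
  then show ?thesis
    by (simp only:) (rule borel_measurable_sum, measurable)
qed

lemma measurable_A_count [measurable]:
  assumes [measurable]: "\<And>i. T i \<in> borel_measurable M" "S \<in> borel_measurable M"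
  shows "A_count T S \<beta> n \<in> borel_measurable M"
  unfolding A_count_def[abs_def] by (intro borel_measurable_card_le) measurable

lemma A_count_le: "A_count T S \<beta> n \<omega> \<le> real n"
proof -
  have "card {i. i < n \<and> T i \<omega> \<le> S \<omega> / real n * (1 + \<beta> * real n powr (-1/3))} \<le> card {..<n}"
    by (intro card_mono) auto
  then show ?thesis
    by (simp add: A_count_def)
qed

locale threshold_count = prob_space M
  for M :: "'a measure" and T :: "nat \<Rightarrow> 'a \<Rightarrow> real" and S :: "'a \<Rightarrow> real" and \<beta> C :: real +
  assumes T_measurable [measurable]: "\<And>i. T i \<in> borel_measurable M"
    and S_measurable [measurable]: "S \<in> borel_measurable M"
    and S_nonneg: "\<And>\<omega>. \<omega> \<in> space M \<Longrightarrow> 0 \<le> S \<omega>"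
    and S_sq_integrable: "integrable M (\<lambda>\<omega>. (S \<omega>)\<^sup>2)"
    and T_indep: "indep_vars (\<lambda>_. borel) T UNIV"
    and C_pos: "0 < C"
    and T_cdf_le: "\<And>i x. 0 < x \<Longrightarrow> prob {\<omega>\<in>space M. T i \<omega> \<le> x} \<le> C * x"
begin

text \<open>Chosen so that \<open>16 n C x = k\<close> at the level \<open>x = scale k (1 + |\<beta>|) / n\<close> of \<open>prob_A_count_ge\<close>.\<close>
definition scale :: real where
  "scale = 1 / (16 * C * (1 + \<bar>\<beta>\<bar>))"

lemma scale_pos: "0 < scale"
  using C_pos by (simp add: scale_def add_pos_nonneg)

lemma threshold_le:
  assumes "1 \<le> n" and "0 \<le> S \<omega>" and "S \<omega> \<le> s"
  shows "S \<omega> / real n * (1 + \<beta> * real n powr (-1/3)) \<le> s * (1 + \<bar>\<beta>\<bar>) / real n"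
proof -
  have "real n powr (-1/3) \<le> 1"
    using powr_mono[of "-1/3" 0 "real n"] assms(1) by simp
  then have "\<beta> * real n powr (-1/3) \<le> \<bar>\<beta>\<bar> * 1"
    by (intro mult_mono) auto
  then have "S \<omega> / real n * (1 + \<beta> * real n powr (-1/3)) \<le> S \<omega> / real n * (1 + \<bar>\<beta>\<bar>)"
    using assms(2) by (intro mult_left_mono) auto
  also have "\<dots> \<le> s / real n * (1 + \<bar>\<beta>\<bar>)"
    using assms by (intro mult_right_mono divide_right_mono) auto
  finally show ?thesis
    by simp
qed

lemma prob_A_count_ge:
  assumes "1 \<le> n"
  shows "prob {\<omega>\<in>space M. real k \<le> A_count T S \<beta> n \<omega>}
    \<le> prob {\<omega>\<in>space M. scale * real k < S \<omega>} + (1/4) ^ k"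
proof (cases "k = 0")
  case True
  have "prob {\<omega>\<in>space M. real k \<le> A_count T S \<beta> n \<omega>} \<le> 1"
    by (rule prob_le_1)
  moreover have "0 \<le> prob {\<omega>\<in>space M. scale * real k < S \<omega>}"
    by (rule measure_nonneg)
  ultimately show ?thesis
    by (simp only: True power_0)
next
  case False
  define x where "x = scale * real k * (1 + \<bar>\<beta>\<bar>) / real n"
  have "0 < x"
    using assms False scale_pos by (simp add: x_def add_pos_nonneg)
  define many_below where "many_below = {\<omega>\<in>space M. k \<le> card {i. i < n \<and> T i \<omega> \<le> x}}"
  have "(\<lambda>\<omega>. real (card {i. i < n \<and> T i \<omega> \<le> x})) \<in> borel_measurable M"
    by (rule borel_measurable_card_le[where g="\<lambda>_. x"]) auto
  then have many_below_event: "many_below \<in> events"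
    unfolding many_below_def by measurable
  have "{\<omega>\<in>space M. real k \<le> A_count T S \<beta> n \<omega>} \<subseteq> {\<omega>\<in>space M. scale * real k < S \<omega>} \<union> many_below"
  proof
    fix \<omega> assume \<omega>: "\<omega> \<in> {\<omega>\<in>space M. real k \<le> A_count T S \<beta> n \<omega>}"
    show "\<omega> \<in> {\<omega>\<in>space M. scale * real k < S \<omega>} \<union> many_below"
    proof (cases "scale * real k < S \<omega>")
      case False
      then have "S \<omega> / real n * (1 + \<beta> * real n powr (-1/3)) \<le> x"
        using threshold_le[OF assms S_nonneg] \<omega> by (simp add: x_def)
      then have "card {i. i < n \<and> T i \<omega> \<le> S \<omega> / real n * (1 + \<beta> * real n powr (-1/3))}
          \<le> card {i. i < n \<and> T i \<omega> \<le> x}"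
        by (intro card_mono) auto
      then show ?thesis
        using \<omega> by (simp add: many_below_def A_count_def)
    qed (use \<omega> in simp)
  qed
  then have "prob {\<omega>\<in>space M. real k \<le> A_count T S \<beta> n \<omega>}
      \<le> prob ({\<omega>\<in>space M. scale * real k < S \<omega>} \<union> many_below)"
    using many_below_event by (intro finite_measure_mono) auto
  also have "\<dots> \<le> prob {\<omega>\<in>space M. scale * real k < S \<omega>} + prob many_below"
    using many_below_event by (intro measure_Un_le) auto
  also have "prob many_below \<le> real (n choose k) * (C * x) ^ k"
    unfolding many_below_def
    using indep_vars_subset[OF T_indep] T_cdf_le \<open>0 < x\<close> by (intro prob_many_below_le) auto
  also have "\<dots> \<le> (1/4) ^ k"
  proof (rule binomial_mult_power_le_quarter_power)
    have "real n * x = scale * (1 + \<bar>\<beta>\<bar>) * real k"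
      using assms by (simp add: x_def)
    moreover have "16 * C * (scale * (1 + \<bar>\<beta>\<bar>)) = 1"
      using C_pos by (simp add: scale_def add_pos_nonneg)
    ultimately show "16 * real n * (C * x) \<le> real k"
      by (metis mult.assoc mult.commute mult.left_neutral order_refl)
  qed (use C_pos \<open>0 < x\<close> in simp)
  finally show ?thesis
    by simp
qed

lemma integrable_S_moment: "integrable M (\<lambda>\<omega>. 2 * (S \<omega> / scale)\<^sup>2 + S \<omega> / scale)"
proof -
  have "(\<lambda>\<omega>. 2 * (S \<omega> / scale)\<^sup>2 + S \<omega> / scale) = (\<lambda>\<omega>. (2 / scale\<^sup>2) * (S \<omega>)\<^sup>2 + (1 / scale) * S \<omega>)"
    by (simp add: fun_eq_iff power_divide)
  moreover have "integrable M S"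
    using S_sq_integrable by (rule square_integrable_imp_integrable[OF S_measurable])
  ultimately show ?thesis
    using S_sq_integrable by simp
qed

definition sq_tail_bound :: "nat \<Rightarrow> real" where
  "sq_tail_bound j =
     expectation (\<lambda>\<omega>. (2 * (S \<omega> / scale)\<^sup>2 + S \<omega> / scale) * indicator {\<omega>\<in>space M. scale * real j < S \<omega>} \<omega>)
     + real j ^ 2 * (1/4) ^ j + 2 * (1/2) ^ j"

lemma sum_sq_tail_weight_prob_S_le:
  "(\<Sum>k=j..n. sq_tail_weight j k * prob {\<omega>\<in>space M. scale * real k < S \<omega>})
    \<le> expectation (\<lambda>\<omega>. (2 * (S \<omega> / scale)\<^sup>2 + S \<omega> / scale) * indicator {\<omega>\<in>space M. scale * real j < S \<omega>} \<omega>)"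
proof -
  have S_events: "{\<omega>\<in>space M. scale * real k < S \<omega>} \<in> events" for k
    by measurable
  have "(\<Sum>k=j..n. sq_tail_weight j k * prob {\<omega>\<in>space M. scale * real k < S \<omega>})
      = expectation (\<lambda>\<omega>. \<Sum>k=j..n. sq_tail_weight j k * indicator {\<omega>\<in>space M. scale * real k < S \<omega>} \<omega>)"
    using S_events by (intro expectation_sum_indicator(1)[symmetric]) auto
  also have "\<dots> \<le> expectation (\<lambda>\<omega>. (2 * (S \<omega> / scale)\<^sup>2 + S \<omega> / scale) * indicator {\<omega>\<in>space M. scale * real j < S \<omega>} \<omega>)"
  proof (rule integral_mono)
    show "integrable M (\<lambda>\<omega>. \<Sum>k=j..n. sq_tail_weight j k * indicator {\<omega>\<in>space M. scale * real k < S \<omega>} \<omega>)"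
      using S_events by (intro expectation_sum_indicator(2)) auto
    show "integrable M (\<lambda>\<omega>. (2 * (S \<omega> / scale)\<^sup>2 + S \<omega> / scale) * indicator {\<omega>\<in>space M. scale * real j < S \<omega>} \<omega>)"
      using S_events integrable_S_moment by (rule integrable_real_mult_indicator)
    fix \<omega> assume "\<omega> \<in> space M"
    define t where "t = S \<omega> / scale"
    have "0 \<le> t"
      using S_nonneg[OF \<open>\<omega> \<in> space M\<close>] scale_pos by (simp add: t_def)
    have "indicator {\<omega>\<in>space M. scale * real k < S \<omega>} \<omega> = (of_bool (real k < t) :: real)" for k
      using \<open>\<omega> \<in> space M\<close> scale_pos by (simp add: t_def pos_less_divide_eq mult.commute)
    then show "(\<Sum>k=j..n. sq_tail_weight j k * indicator {\<omega>\<in>space M. scale * real k < S \<omega>} \<omega>)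
        \<le> (2 * (S \<omega> / scale)\<^sup>2 + S \<omega> / scale) * indicator {\<omega>\<in>space M. scale * real j < S \<omega>} \<omega>"
      using sum_sq_tail_weight_of_bool_less_le[OF \<open>0 \<le> t\<close>, of j n] by (simp add: t_def)
  qed
  finally show ?thesis .
qed

lemma integrable_sq_A_count: "integrable M (\<lambda>\<omega>. (A_count T S \<beta> n \<omega>)\<^sup>2)"
proof (rule integrable_const_bound[where B="real n ^ 2"])
  show "AE \<omega> in M. norm ((A_count T S \<beta> n \<omega>)\<^sup>2) \<le> real n ^ 2"
    using A_count_le by (intro AE_I2) (simp add: power_mono A_count_def)
qed measurable

lemma integrable_sq_A_count_indicator:
  assumes "{\<omega>\<in>space M. \<omega> \<in> P} \<in> events"
  shows "integrable M (\<lambda>\<omega>. (A_count T S \<beta> n \<omega>)\<^sup>2 * indicator P \<omega>)"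
proof (rule Bochner_Integration.integrable_bound[OF integrable_sq_A_count])
  show "(\<lambda>\<omega>. (A_count T S \<beta> n \<omega>)\<^sup>2 * indicator P \<omega>) \<in> borel_measurable M"
    using assms by measurable
qed (auto simp: indicator_def)

lemma expectation_sq_A_count_ge_le:
  assumes "1 \<le> n"
  shows "expectation (\<lambda>\<omega>. (A_count T S \<beta> n \<omega>)\<^sup>2 * indicator {\<omega>. real j \<le> A_count T S \<beta> n \<omega>} \<omega>)
    \<le> sq_tail_bound j"
proof -
  let ?A = "A_count T S \<beta> n"
  have ge_events: "{\<omega>\<in>space M. real k \<le> ?A \<omega>} \<in> events" for k
    by measurable
  have "expectation (\<lambda>\<omega>. (?A \<omega>)\<^sup>2 * indicator {\<omega>. real j \<le> ?A \<omega>} \<omega>)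
      \<le> expectation (\<lambda>\<omega>. \<Sum>k=j..n. sq_tail_weight j k * indicator {\<omega>\<in>space M. real k \<le> ?A \<omega>} \<omega>)"
  proof (rule integral_mono)
    show "integrable M (\<lambda>\<omega>. (?A \<omega>)\<^sup>2 * indicator {\<omega>. real j \<le> ?A \<omega>} \<omega>)"
      by (rule integrable_sq_A_count_indicator) measurable
    show "integrable M (\<lambda>\<omega>. \<Sum>k=j..n. sq_tail_weight j k * indicator {\<omega>\<in>space M. real k \<le> ?A \<omega>} \<omega>)"
      using ge_events by (intro expectation_sum_indicator(2)) auto
    fix \<omega> assume "\<omega> \<in> space M"
    define N where "N = card {i. i < n \<and> T i \<omega> \<le> S \<omega> / real n * (1 + \<beta> * real n powr (-1/3))}"
    have "?A \<omega> = real N" and "N \<le> n"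
      using A_count_le[of T S \<beta> n \<omega>] by (simp_all add: A_count_def N_def)
    then show "(?A \<omega>)\<^sup>2 * indicator {\<omega>. real j \<le> ?A \<omega>} \<omega>
        \<le> (\<Sum>k=j..n. sq_tail_weight j k * indicator {\<omega>\<in>space M. real k \<le> ?A \<omega>} \<omega>)"
      using sq_of_bool_le_sum_sq_tail_weight[of N n j] \<open>\<omega> \<in> space M\<close> by (simp add: indicator_def)
  qed
  also have "\<dots> = (\<Sum>k=j..n. sq_tail_weight j k * prob {\<omega>\<in>space M. real k \<le> ?A \<omega>})"
    using ge_events by (intro expectation_sum_indicator(1)) auto
  also have "\<dots> \<le> (\<Sum>k=j..n. sq_tail_weight j k * (prob {\<omega>\<in>space M. scale * real k < S \<omega>} + (1/4) ^ k))"
    by (intro sum_mono mult_left_mono prob_A_count_ge assms sq_tail_weight_nonneg)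
  also have "\<dots> = (\<Sum>k=j..n. sq_tail_weight j k * prob {\<omega>\<in>space M. scale * real k < S \<omega>})
      + (\<Sum>k=j..n. sq_tail_weight j k * (1/4) ^ k)"
    by (simp add: distrib_left sum.distrib)
  also have "\<dots> \<le> sq_tail_bound j"
    using add_mono[OF sum_sq_tail_weight_prob_S_le sum_sq_tail_weight_quarter_power_le]
    by (simp add: sq_tail_bound_def add.assoc)
  finally show ?thesis .
qed

lemma sq_tail_bound_tendsto_0: "sq_tail_bound \<longlonglongrightarrow> 0"
proof -
  let ?g = "\<lambda>\<omega>. 2 * (S \<omega> / scale)\<^sup>2 + S \<omega> / scale"
  have "(\<lambda>j. expectation (\<lambda>\<omega>. ?g \<omega> * indicator {\<omega>\<in>space M. scale * real j < S \<omega>} \<omega>))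
      \<longlonglongrightarrow> expectation (\<lambda>_. 0)"
  proof (rule integral_dominated_convergence[where w = ?g])
    show "AE \<omega> in M. (\<lambda>j. ?g \<omega> * indicator {\<omega>\<in>space M. scale * real j < S \<omega>} \<omega>) \<longlonglongrightarrow> 0"
    proof (rule AE_I2)
      fix \<omega>
      obtain N :: nat where "S \<omega> / scale < real N"
        using reals_Archimedean2 by blast
      then have "S \<omega> < scale * real N"
        using scale_pos by (simp add: pos_divide_less_eq mult.commute)
      then have "\<forall>j\<ge>N. \<not> scale * real j < S \<omega>"
        using scale_pos by (smt (verit) mult_left_mono of_nat_mono)
      then show "(\<lambda>j. ?g \<omega> * indicator {\<omega>\<in>space M. scale * real j < S \<omega>} \<omega>) \<longlonglongrightarrow> 0"
        by (intro tendsto_eventually eventually_sequentiallyI[of N]) simp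
    qed
    show "AE \<omega> in M. norm (?g \<omega> * indicator {\<omega>\<in>space M. scale * real j < S \<omega>} \<omega>) \<le> ?g \<omega>" for j
      using S_nonneg scale_pos by (intro AE_I2) (auto simp: indicator_def)
  qed (use integrable_S_moment in auto)
  moreover have "(\<lambda>j. real j ^ 2 * (1/4::real) ^ j) \<longlonglongrightarrow> 0"
    by real_asymp
  moreover have "(\<lambda>j. 2 * (1/2::real) ^ j) \<longlonglongrightarrow> 0"
    using tendsto_mult_right_zero[OF LIMSEQ_power_zero[of "1/2::real"]] by simp
  ultimately have "sq_tail_bound \<longlonglongrightarrow> 0 + 0 + 0"
    unfolding sq_tail_bound_def[abs_def] by (intro tendsto_add) simp_all
  then show ?thesis
    by simp
qed

lemma tendsto_sq_tail_bound_sqrt: "((\<lambda>K. sq_tail_bound (Suc (nat \<lfloor>sqrt K\<rfloor>))) \<longlongrightarrow> 0) at_top"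
proof -
  have "filterlim (\<lambda>K. Suc (nat \<lfloor>sqrt K\<rfloor>)) sequentially at_top"
    using filterlim_compose[OF filterlim_Suc filterlim_compose[OF filterlim_nat_sequentially
        filterlim_compose[OF filterlim_floor_sequentially sqrt_at_top]]]
    by (simp add: o_def)
  from filterlim_compose[OF sq_tail_bound_tendsto_0 this] show ?thesis .
qed

lemma expectation_sq_A_count_tail_le:
  assumes "1 \<le> n" and "0 \<le> K"
  shows "expectation (\<lambda>\<omega>. (A_count T S \<beta> n \<omega>)\<^sup>2 * indicator {\<omega>. K < (A_count T S \<beta> n \<omega>)\<^sup>2} \<omega>)
    \<le> sq_tail_bound (Suc (nat \<lfloor>sqrt K\<rfloor>))"
proof -
  let ?A = "A_count T S \<beta> n" and ?j = "Suc (nat \<lfloor>sqrt K\<rfloor>)"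
  have "expectation (\<lambda>\<omega>. (?A \<omega>)\<^sup>2 * indicator {\<omega>. K < (?A \<omega>)\<^sup>2} \<omega>)
      \<le> expectation (\<lambda>\<omega>. (?A \<omega>)\<^sup>2 * indicator {\<omega>. real ?j \<le> ?A \<omega>} \<omega>)"
  proof (rule integral_mono)
    show "integrable M (\<lambda>\<omega>. (?A \<omega>)\<^sup>2 * indicator {\<omega>. K < (?A \<omega>)\<^sup>2} \<omega>)"
      by (rule integrable_sq_A_count_indicator) measurable
    show "integrable M (\<lambda>\<omega>. (?A \<omega>)\<^sup>2 * indicator {\<omega>. real ?j \<le> ?A \<omega>} \<omega>)"
      by (rule integrable_sq_A_count_indicator) measurable
    fix \<omega>
    define N where "N = card {i. i < n \<and> T i \<omega> \<le> S \<omega> / real n * (1 + \<beta> * real n powr (-1/3))}"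
    have A: "?A \<omega> = real N"
      by (simp add: A_count_def N_def)
    show "(?A \<omega>)\<^sup>2 * indicator {\<omega>. K < (?A \<omega>)\<^sup>2} \<omega> \<le> (?A \<omega>)\<^sup>2 * indicator {\<omega>. real ?j \<le> ?A \<omega>} \<omega>"
    proof (cases "K < (?A \<omega>)\<^sup>2")
      case True
      then have "sqrt K < real N"
        using real_sqrt_less_mono[OF True] by (simp add: A)
      then have "\<lfloor>sqrt K\<rfloor> < int N"
        by (simp add: floor_less_iff)
      then have "real ?j \<le> ?A \<omega>"
        using \<open>0 \<le> K\<close> by (simp add: A)
      then show ?thesis
        by simp
    qed (simp add: indicator_def)
  qed
  also have "\<dots> \<le> sq_tail_bound ?j"
    by (rule expectation_sq_A_count_ge_le[OF assms(1)])
  finally show ?thesis .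
qed

lemma uniformly_integrable_laws_sq_A_count:
  "uniformly_integrable_laws (\<lambda>n. distr M borel (\<lambda>\<omega>. (A_count T S \<beta> n \<omega>)\<^sup>2))"
proof -
  have "(\<lambda>\<omega>. (A_count T S \<beta> n \<omega>)\<^sup>2) \<in> borel_measurable M" for n
    by measurable
  then show ?thesis
    by (rule uniformly_integrable_laws_distrI[OF _ _ integrable_sq_A_count expectation_sq_A_count_tail_le
          tendsto_sq_tail_bound_sqrt]) simp
qed

lemma tendsto_expectation_sq_A_count_tail:
  assumes "filterlim K at_top sequentially"
  shows "(\<lambda>n. expectation (\<lambda>\<omega>. (A_count T S \<beta> n \<omega>)\<^sup>2 * indicator {\<omega>. K n < (A_count T S \<beta> n \<omega>)\<^sup>2} \<omega>))
    \<longlonglongrightarrow> 0"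
  by (rule tendsto_expectation_tail_zero[OF _ expectation_sq_A_count_tail_le tendsto_sq_tail_bound_sqrt assms])
    simp

end

theorem mainTheorem9:
  fixes M :: "'a measure" and T :: "nat \<Rightarrow> 'a \<Rightarrow> real" and S :: "'a \<Rightarrow> real"
    and fT0 :: real and \<beta> :: real
  assumes "prob_space M"
    and T_meas: "\<And>i. T i \<in> borel_measurable M"
    and S_meas: "S \<in> borel_measurable M"
    and T_nonneg: "\<And>i \<omega>. \<omega> \<in> space M \<Longrightarrow> T i \<omega> \<ge> 0"
    and S_nonneg: "\<And>\<omega>. \<omega> \<in> space M \<Longrightarrow> S \<omega> \<ge> 0"
    and indep: "prob_space.indep_vars M (\<lambda>_. borel)
                  (\<lambda>j. case j of None \<Rightarrow> S | Some i \<Rightarrow> T i) UNIV"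
    and ident: "\<And>i. distr M borel (T i) = distr M borel (T 0)"
    and fT0: "0 < fT0"
    and cdf: "(\<lambda>x. measure M {\<omega> \<in> space M. T 0 \<omega> \<le> x} - fT0 * x)
                \<in> o[at_right 0](\<lambda>x. x powr (4/3))"
    and S2: "integrable M (\<lambda>\<omega>. (S \<omega>)\<^sup>2)"
  shows "(\<exists>\<mu> :: nat \<Rightarrow> real measure.
            (\<forall>n\<ge>1. prob_space (\<mu> n) \<and> sets (\<mu> n) = sets borel \<and>
                    stoch_dominated_by_law M (\<lambda>\<omega>. (A_count T S \<beta> n \<omega>)\<^sup>2) (\<mu> n))
            \<and> uniformly_integrable_laws \<mu>)
       \<and> (\<forall>\<epsilon>>0. (\<lambda>n. prob_space.expectation M
               (\<lambda>\<omega>. (A_count T S \<beta> n \<omega>)\<^sup>2 *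
                  indicator {\<omega>. (A_count T S \<beta> n \<omega>)\<^sup>2 > \<epsilon> * real n powr (2/3)} \<omega>))
             \<longlonglongrightarrow> 0)"
proof -
  interpret prob_space M by fact
  obtain C where "0 < C" and cdf_T0_le: "\<And>x. 0 < x \<Longrightarrow> prob {\<omega>\<in>space M. T 0 \<omega> \<le> x} \<le> C * x"
    using cdf_le_linear[OF cdf] by blast
  have T_cdf_le: "prob {\<omega>\<in>space M. T i \<omega> \<le> x} \<le> C * x" if "0 < x" for i x
    unfolding prob_le_eq_if_distr_eq[OF T_meas T_meas ident, of i x] by (rule cdf_T0_le[OF that])
  have T_indep: "indep_vars (\<lambda>_. borel) T UNIV"
    using indep_vars_Some[OF indep] by simp
  interpret threshold_count M T S \<beta> C
    using \<open>prob_space M\<close> T_meas S_meas S_nonneg S2 T_indep \<open>0 < C\<close> T_cdf_le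
    by (simp add: threshold_count_def threshold_count_axioms_def)
  have A_sq_meas: "(\<lambda>\<omega>. (A_count T S \<beta> n \<omega>)\<^sup>2) \<in> borel_measurable M" for n
    by measurable
  show ?thesis
  proof (intro conjI exI[of _ "\<lambda>n. distr M borel (\<lambda>\<omega>. (A_count T S \<beta> n \<omega>)\<^sup>2)"] allI impI)
    fix \<epsilon> :: real assume "0 < \<epsilon>"
    have "filterlim (\<lambda>n::nat. real n powr (2/3)) at_top sequentially"
      by real_asymp
    then have "filterlim (\<lambda>n. \<epsilon> * real n powr (2/3)) at_top sequentially"
      by (rule filterlim_tendsto_pos_mult_at_top[OF tendsto_const \<open>0 < \<epsilon>\<close>])
    then show "(\<lambda>n. expectation (\<lambda>\<omega>. (A_count T S \<beta> n \<omega>)\<^sup>2 *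
        indicator {\<omega>. \<epsilon> * real n powr (2/3) < (A_count T S \<beta> n \<omega>)\<^sup>2} \<omega>)) \<longlonglongrightarrow> 0"
      by (rule tendsto_expectation_sq_A_count_tail)
  qed (use A_sq_meas uniformly_integrable_laws_sq_A_count in \<open>auto intro: prob_space_distr stoch_dominated_by_law_distr\<close>)
qed

end
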